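(* Let $\mathfrak{g}$ be an SVN with sufficient storage under the Multi-Objective Framework, with parameters $\beta,\lambda,c\in(0,1)$. Then $\mathfrak{g}$ is bilaterally stable if and only if both of the following hold. 1. For every link $\langle ij\rangle\in\mathfrak{g}$: $\beta[\lambda^{\eta_i(\mathfrak{g})-1}-\lambda^{\eta_i(\mathfrak{g})}]<c$ implies $\beta[\lambda^{\eta_j(\mathfrak{g})-1}-\lambda^{\eta_j(\mathfrak{g})}]>c$. 2. For every pair of distinct agents $i,j$ with $\langle ij\rangle\notin\mathfrak{g}$: $\beta[\lambda^{\eta_i(\mathfrak{g})}-\lambda^{\eta_i(\mathfrak{g})+1}]>c$ implies $\beta[\lambda^{\eta_j(\mathfrak{g})}-\lambda^{\eta_j(\mathfrak{g})+1}]<c$.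
   Context: A social storage network $\mathfrak{g}$ on a finite set $\mathbf{A}$ of agents is a simple undirected graph; $\eta_i(\mathfrak{g})$ is the number of neighbours of $i$. For non-adjacent $i,j$, $\mathfrak{g}+\langle ij\rangle$ denotes the network with the link $\langle ij\rangle$ added; for adjacent $i,j$, $\mathfrak{g}-\langle ij\rangle$ denotes the network with it removed. The network is an SVN under the Multi-Objective Framework when: - all agents have the same data worth $\beta$; - $\lambda$ is the disk failure rate and $c$ is the cost per link; - storage is sufficient: $s_i\ge\sum_{j\ne i}d_j$ for all $i$, where $s_i$ is agent $i$'s offered storage and $d_j$ is agent $j$'s data size; - utility is $u_i(\mathfrak{g})=\beta(1-\lambda^{\eta_i(\mathfrak{g})})-c\,\eta_i(\mathfrak{g})$. $\mathfrak{g}$ is bilaterally stable if both of the following hold. 1. For every link $\langle ij\rangle\in\mathfrak{g}$: if $u_i(\mathfrak{g}-\langle ij\rangle)>u_i(\mathfrak{g})$, then $u_j(\mathfrak{g}-\langle ij\rangle)<u_j(\mathfrak{g})$. 2. For every non-link $\langle ij\rangle\notin\mathfrak{g}$: if $u_i(\mathfrak{g}+\langle ij\rangle)>u_i(\mathfrak{g})$, then $u_j(\mathfrak{g}+\langle ij\rangle)<u_j(\mathfrak{g})$. In other words, both adding and deleting a link require mutual consent. *)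

theory Defs
  imports Complex_Main
begin

definition network :: "'a set \<Rightarrow> ('a \<Rightarrow> 'a \<Rightarrow> bool) \<Rightarrow> bool" where
  "network A E \<longleftrightarrow> finite A \<and> (\<forall>x y. E x y \<longrightarrow> x \<in> A \<and> y \<in> A)
     \<and> (\<forall>x y. E x y \<longrightarrow> E y x) \<and> (\<forall>x. \<not> E x x)"

definition degree :: "'a set \<Rightarrow> ('a \<Rightarrow> 'a \<Rightarrow> bool) \<Rightarrow> 'a \<Rightarrow> nat" where
  "degree A E i = card {j \<in> A. E i j}"

definition add_link :: "('a \<Rightarrow> 'a \<Rightarrow> bool) \<Rightarrow> 'a \<Rightarrow> 'a \<Rightarrow> ('a \<Rightarrow> 'a \<Rightarrow> bool)" where
  "add_link E i j = (\<lambda>x y. E x y \<or> (x = i \<and> y = j) \<or> (x = j \<and> y = i))"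

definition del_link :: "('a \<Rightarrow> 'a \<Rightarrow> bool) \<Rightarrow> 'a \<Rightarrow> 'a \<Rightarrow> ('a \<Rightarrow> 'a \<Rightarrow> bool)" where
  "del_link E i j = (\<lambda>x y. E x y \<and> \<not> (x = i \<and> y = j) \<and> \<not> (x = j \<and> y = i))"

definition utility :: "real \<Rightarrow> real \<Rightarrow> real \<Rightarrow> 'a set \<Rightarrow> ('a \<Rightarrow> 'a \<Rightarrow> bool) \<Rightarrow> 'a \<Rightarrow> real" where
  "utility \<beta> lam c A E i = \<beta> * (1 - lam ^ degree A E i) - c * real (degree A E i)"

definition sufficient_storage :: "'a set \<Rightarrow> ('a \<Rightarrow> real) \<Rightarrow> ('a \<Rightarrow> real) \<Rightarrow> bool" where
  "sufficient_storage A s d \<longleftrightarrow> (\<forall>i\<in>A. s i \<ge> (\<Sum>j\<in>A - {i}. d j))"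

definition bilaterally_stable ::
  "real \<Rightarrow> real \<Rightarrow> real \<Rightarrow> 'a set \<Rightarrow> ('a \<Rightarrow> 'a \<Rightarrow> bool) \<Rightarrow> bool" where
  "bilaterally_stable \<beta> lam c A E \<longleftrightarrow>
     (\<forall>i\<in>A. \<forall>j\<in>A. E i j \<longrightarrow>
        (utility \<beta> lam c A (del_link E i j) i > utility \<beta> lam c A E i \<longrightarrow>
         utility \<beta> lam c A (del_link E i j) j < utility \<beta> lam c A E j)) \<and>
     (\<forall>i\<in>A. \<forall>j\<in>A. i \<noteq> j \<longrightarrow> \<not> E i j \<longrightarrow>
        (utility \<beta> lam c A (add_link E i j) i > utility \<beta> lam c A E i \<longrightarrow>
         utility \<beta> lam c A (add_link E i j) j < utility \<beta> lam c A E j))"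

end

theory Submission
  imports Defs
begin

text \<open>Adding or deleting the link \<open>\<langle>ij\<rangle>\<close> changes the degree of each endpoint by exactly one,
  and the utility \<open>\<beta>(1 - \<lambda>^n) - c n\<close> depends on the network only through the degree \<open>n\<close>.
  Hence an endpoint gains from deleting (adding) the link exactly when the marginal benefit
  \<open>\<beta>(\<lambda>^(n-1) - \<lambda>^n)\<close> is below \<open>c\<close> (resp. \<open>\<beta>(\<lambda>^n - \<lambda>^(n+1))\<close> is above \<open>c\<close>), and
  bilateral stability turns into the stated conditions.\<close>

lemma del_link_commute: "del_link E j i = del_link E i j"
  unfolding del_link_def by (intro ext) blast

lemma add_link_commute: "add_link E j i = add_link E i j"
  unfolding add_link_def by (intro ext) blast

lemma network_sym: "network A E \<Longrightarrow> E i j \<Longrightarrow> E j i"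
  unfolding network_def by blast

lemma degree_pos_if_link:
  assumes "network A E" "E i j"
  shows "0 < degree A E i"
proof -
  have "finite A" "j \<in> A" using assms unfolding network_def by blast+
  then have "j \<in> {k \<in> A. E i k}" "finite {k \<in> A. E i k}" using assms(2) by auto
  then show ?thesis unfolding degree_def by (simp add: card_gt_0_iff) blast
qed

lemma degree_del_link:
  assumes "network A E" "E i j"
  shows "degree A (del_link E i j) i = degree A E i - 1"
proof -
  have "finite A" "j \<in> A" using assms unfolding network_def by blast+
  moreover have "{k \<in> A. del_link E i j i k} = {k \<in> A. E i k} - {j}"
    using assms unfolding network_def del_link_def by auto
  ultimately show ?thesis unfolding degree_def using assms(2) by (simp add: card_Diff_singleton)
qed

lemma degree_add_link:
  assumes "network A E" "\<not> E i j" "j \<in> A" "i \<noteq> j"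
  shows "degree A (add_link E i j) i = degree A E i + 1"
proof -
  have "finite A" using assms unfolding network_def by blast
  moreover have "{k \<in> A. add_link E i j i k} = insert j {k \<in> A. E i k}"
    using assms unfolding add_link_def by auto
  ultimately show ?thesis unfolding degree_def using assms(2) by simp
qed

lemma utility_del_link:
  assumes "network A E" "E i j"
  shows "utility \<beta> lam c A (del_link E i j) i > utility \<beta> lam c A E i
           \<longleftrightarrow> \<beta> * (lam ^ (degree A E i - 1) - lam ^ degree A E i) < c"
    and "utility \<beta> lam c A (del_link E i j) i < utility \<beta> lam c A E i
           \<longleftrightarrow> \<beta> * (lam ^ (degree A E i - 1) - lam ^ degree A E i) > c"
proof -
  obtain m where "degree A E i = Suc m"
    using degree_pos_if_link[OF assms] by (cases "degree A E i") auto
  then show "utility \<beta> lam c A (del_link E i j) i > utility \<beta> lam c A E i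
           \<longleftrightarrow> \<beta> * (lam ^ (degree A E i - 1) - lam ^ degree A E i) < c"
    and "utility \<beta> lam c A (del_link E i j) i < utility \<beta> lam c A E i
           \<longleftrightarrow> \<beta> * (lam ^ (degree A E i - 1) - lam ^ degree A E i) > c"
    unfolding utility_def degree_del_link[OF assms] by (simp_all add: algebra_simps)
qed

lemma utility_add_link:
  assumes "network A E" "\<not> E i j" "j \<in> A" "i \<noteq> j"
  shows "utility \<beta> lam c A (add_link E i j) i > utility \<beta> lam c A E i
           \<longleftrightarrow> \<beta> * (lam ^ degree A E i - lam ^ (degree A E i + 1)) > c"
    and "utility \<beta> lam c A (add_link E i j) i < utility \<beta> lam c A E i
           \<longleftrightarrow> \<beta> * (lam ^ degree A E i - lam ^ (degree A E i + 1)) < c"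
  unfolding utility_def degree_add_link[OF assms] by (simp_all add: algebra_simps)

theorem theorem1:
  fixes A :: "'a set" and E :: "'a \<Rightarrow> 'a \<Rightarrow> bool"
    and s d :: "'a \<Rightarrow> real" and \<beta> lam c :: real
  assumes "network A E"
    and "sufficient_storage A s d"
    and "0 < \<beta>" "\<beta> < 1" "0 < lam" "lam < 1" "0 < c" "c < 1"
  shows "bilaterally_stable \<beta> lam c A E \<longleftrightarrow>
    ((\<forall>i\<in>A. \<forall>j\<in>A. E i j \<longrightarrow>
        (\<beta> * (lam ^ (degree A E i - 1) - lam ^ degree A E i) < c \<longrightarrow>
         \<beta> * (lam ^ (degree A E j - 1) - lam ^ degree A E j) > c)) \<and>
     (\<forall>i\<in>A. \<forall>j\<in>A. i \<noteq> j \<longrightarrow> \<not> E i j \<longrightarrow>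
        (\<beta> * (lam ^ degree A E i - lam ^ (degree A E i + 1)) > c \<longrightarrow>
         \<beta> * (lam ^ degree A E j - lam ^ (degree A E j + 1)) < c)))"
proof -
  note network = assms(1)
  have deletion: "utility \<beta> lam c A (del_link E i j) j < utility \<beta> lam c A E j
      \<longleftrightarrow> \<beta> * (lam ^ (degree A E j - 1) - lam ^ degree A E j) > c" if "E i j" for i j
    using utility_del_link(2)[OF network network_sym[OF network that]] by (simp add: del_link_commute)
  have addition: "utility \<beta> lam c A (add_link E i j) j < utility \<beta> lam c A E j
      \<longleftrightarrow> \<beta> * (lam ^ degree A E j - lam ^ (degree A E j + 1)) < c"
    if "\<not> E i j" "i \<in> A" "i \<noteq> j" for i j
  proof -
    have "\<not> E j i" using that(1) network_sym[OF network] by blast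
    then show ?thesis
      using utility_add_link(2)[OF network, of j i] that(2,3) by (simp add: add_link_commute)
  qed
  show ?thesis
    unfolding bilaterally_stable_def
    using utility_del_link(1)[OF network] utility_add_link(1)[OF network] deletion addition
    by (auto simp del: One_nat_def)
qed

end
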